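(* Let $f(y\mid\vec x)$ be a conditional density of $Y\in\mathbb R$ given $\vec X=\vec x\in\mathcal X$ that is continuous in $y$ for every $\vec x$, and suppose the estimate used satisfies $\widehat f=f$. For $\vec x\in\mathcal X$ and $t\ge0$ define the profile $g_{\vec x}(t)=\int_{\{y: f(y\mid\vec x)\ge t\}} f(y\mid\vec x)\,dy$. Let $\vec x_{n+1}\in\mathcal X$ and let $(\vec X_1,Y_1),\ldots,(\vec X_m,Y_m)$ be the samples falling in the same partition element as $\vec x_{n+1}$, where, conditionally on the features $\vec x_1,\ldots,\vec x_m$, the responses $Y_i$ are independent with densities $f(\cdot\mid\vec x_i)$, and assume $g_{\vec x_i}=g_{\vec x_{n+1}}$ for all $i=1,\ldots,m$. Let $T_m=q\big(\alpha;\{f(Y_i\mid\vec x_i):i=1,\ldots,m\}\big)$. Then for every fixed $\alpha\in(0,1)$, $$T_m\xrightarrow[m\to\infty]{\text{a.s.}} t^*,$$ where $t^*=t^*(\vec x_{n+1},\alpha)$ is the cutoff of the oracle band for $f(\cdot\mid\vec x_{n+1})$, i.e. the value such that $\{y: f(y\mid\vec x_{n+1})\ge t^*\}$ is the smallest predictive region with coverage $1-\alpha$ (equivalently $g_{\vec x_{n+1}}(t^* )=1-\alpha$).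
   Context: For a finite set of reals $\{t_1,\ldots,t_m\}$, $q(\beta;\{t_1,\ldots,t_m\})$ denotes its empirical $\beta$ quantile. *)

theory Defs
  imports "HOL-Probability.Probability"
begin

text \<open>Empirical beta-quantile of a finite (multi)set of reals, given as a list:
  the ceiling(beta m)-th smallest value (lower empirical quantile,
  inf of t with empirical CDF at t at least beta).\<close>
definition emp_quantile :: "real \<Rightarrow> real list \<Rightarrow> real" where
  "emp_quantile \<beta> ts = sort ts ! (nat \<lceil>\<beta> * real (length ts)\<rceil> - 1)"

definition profile :: "('x \<Rightarrow> real \<Rightarrow> real) \<Rightarrow> 'x \<Rightarrow> real \<Rightarrow> real" where
  "profile f x t = (LINT y:{y. t \<le> f x y}|lborel. f x y)"

end

theory Submission
  imports Defs
begin

text \<open>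
  The empirical \<open>\<alpha>\<close>-quantile of a sample is below \<open>c\<close> exactly when at least a fraction
  \<open>\<alpha>\<close> of the sample is below \<open>c\<close>. For fixed \<open>c \<ge> 0\<close> the indicators of
  \<open>f (x i) (Y i) < c\<close> are independent with common mean \<open>1 - g c\<close>, where \<open>g\<close> is the profile of
  \<open>x0\<close> shared by all \<open>x i\<close>; by Hoeffding's inequality and Borel--Cantelli their averages
  converge almost surely to \<open>1 - g c\<close>. As \<open>g\<close> is antitone and takes the value \<open>1 - \<alpha>\<close> only
  at \<open>t_star\<close>, this limit is below \<open>\<alpha>\<close> for \<open>c < t_star\<close> and above \<open>\<alpha>\<close> for \<open>c > t_star\<close>.
  Using the countably many levels \<open>t_star \<plusminus> 1/(n+1)\<close> at once traps the quantile at
  \<open>t_star\<close>.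
\<close>

lemma sorted_nth_less_iff_less_length_filter:
  fixes s :: "'a::linorder list"
  assumes s: "sorted s" and k: "k < length s"
  shows "s ! k < c \<longleftrightarrow> k < length (filter (\<lambda>t. t < c) s)"
proof
  assume "s ! k < c"
  then have "\<forall>t\<in>set (take (Suc k) s). t < c"
    using s k by (auto simp: in_set_conv_nth less_Suc_eq_le) (meson le_less_trans sorted_nth_mono)
  then have "Suc k = length (filter (\<lambda>t. t < c) (take (Suc k) s))"
    using k by simp
  also have "\<dots> \<le> length (filter (\<lambda>t. t < c) s)"
    by (metis append_take_drop_id filter_append length_append le_add1)
  finally show "k < length (filter (\<lambda>t. t < c) s)" by simp
next
  assume less: "k < length (filter (\<lambda>t. t < c) s)"
  show "s ! k < c"
  proof (rule ccontr)
    assume "\<not> s ! k < c"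
    then have "\<forall>t\<in>set (drop k s). \<not> t < c"
      using s by (auto simp: in_set_conv_nth not_less) (metis add.commute le_add2 less_diff_conv order_trans sorted_nth_mono)
    then have "filter (\<lambda>t. t < c) s = filter (\<lambda>t. t < c) (take k s)"
      by (metis append_take_drop_id filter_append filter_False append_Nil2)
    then show False
      using less length_filter_le[of "\<lambda>t. t < c" "take k s"] by simp
  qed
qed

definition frac_below :: "real \<Rightarrow> real list \<Rightarrow> real" where
  "frac_below c ts = length (filter (\<lambda>t. t < c) ts) / length ts"

lemma emp_quantile_less_iff:
  assumes "0 < \<beta>" "\<beta> \<le> 1" "ts \<noteq> []"
  shows "emp_quantile \<beta> ts < c \<longleftrightarrow> \<beta> \<le> frac_below c ts"
proof -
  define n where "n = length ts"
  define below where "below = length (filter (\<lambda>t. t < c) ts)"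
  define k where "k = nat \<lceil>\<beta> * n\<rceil>"
  have n: "0 < n" using assms(3) by (simp add: n_def)
  have "0 < \<beta> * n" "\<beta> * n \<le> n"
    using assms n by (simp_all add: mult_le_cancel_right1)
  then have k: "1 \<le> k" "k \<le> n"
    unfolding k_def by (linarith, simp add: ceiling_le_iff)
  have "emp_quantile \<beta> ts < c \<longleftrightarrow> sort ts ! (k - 1) < c"
    by (simp add: emp_quantile_def k_def n_def)
  also have "\<dots> \<longleftrightarrow> k - 1 < below"
    using sorted_nth_less_iff_less_length_filter[of "sort ts" "k - 1" c] k
    by (simp add: n_def below_def filter_sort)
  also have "\<dots> \<longleftrightarrow> k \<le> below"
    using k(1) by linarith
  also have "\<dots> \<longleftrightarrow> \<beta> * n \<le> below"
    unfolding k_def by (simp add: nat_le_iff ceiling_le_iff)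
  also have "\<dots> \<longleftrightarrow> \<beta> \<le> frac_below c ts"
    using n by (simp add: frac_below_def n_def below_def pos_le_divide_eq)
  finally show ?thesis .
qed

lemma emp_quantile_tendsto_if_frac_below:
  fixes ts :: "nat \<Rightarrow> real list" and a b :: "nat \<Rightarrow> real"
  assumes \<beta>: "0 < \<beta>" "\<beta> \<le> 1"
    and nonempty: "eventually (\<lambda>m. ts m \<noteq> []) sequentially"
    and a: "a \<longlonglongrightarrow> t" and b: "b \<longlonglongrightarrow> t"
    and below_a: "\<And>n. eventually (\<lambda>m. frac_below (a n) (ts m) < \<beta>) sequentially"
    and below_b: "\<And>n. eventually (\<lambda>m. \<beta> \<le> frac_below (b n) (ts m)) sequentially"
  shows "(\<lambda>m. emp_quantile \<beta> (ts m)) \<longlonglongrightarrow> t"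
proof (rule order_tendstoI)
  fix l assume "l < t"
  then obtain n where n: "l < a n"
    using order_tendstoD(1)[OF a] by (auto simp: eventually_sequentially)
  from nonempty below_a[of n] show "eventually (\<lambda>m. l < emp_quantile \<beta> (ts m)) sequentially"
  proof eventually_elim
    case (elim m)
    then show ?case using n emp_quantile_less_iff[OF \<beta>, of "ts m" "a n"] by auto
  qed
next
  fix u assume "t < u"
  then obtain n where n: "b n < u"
    using order_tendstoD(2)[OF b] by (auto simp: eventually_sequentially)
  from nonempty below_b[of n] show "eventually (\<lambda>m. emp_quantile \<beta> (ts m) < u) sequentially"
  proof eventually_elim
    case (elim m)
    then show ?case using n emp_quantile_less_iff[OF \<beta>, of "ts m" "b n"] by auto
  qed
qed

lemma frac_below_map_upt:
  "frac_below c (map v [1..<Suc m]) = (\<Sum>i=1..m. indicator {..<c} (v i)) / m"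
proof -
  have "real (length (filter (\<lambda>t. t < c) (map v [1..<Suc m]))) = (\<Sum>i=1..m. indicator {..<c} (v i))"
    by (induction m) (auto simp: indicator_def)
  then show ?thesis by (simp add: frac_below_def)
qed

lemma (in prob_space) AE_eventually_sum_deviation_less:
  fixes Z :: "nat \<Rightarrow> 'a \<Rightarrow> real" and a b p \<epsilon> :: real
  assumes indep: "indep_vars (\<lambda>_. borel) Z {1..}"
    and bounded: "\<And>i. i \<ge> 1 \<Longrightarrow> AE \<omega> in M. Z i \<omega> \<in> {a..b}"
    and mean: "\<And>i. i \<ge> 1 \<Longrightarrow> expectation (Z i) = p"
    and "a < b" "\<epsilon> > 0"
  shows "AE \<omega> in M. eventually (\<lambda>m. \<bar>(\<Sum>i=1..m. Z i \<omega>) - m * p\<bar> < m * \<epsilon>) sequentially"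
proof -
  define A where "A m = {\<omega>\<in>space M. m * \<epsilon> \<le> \<bar>(\<Sum>i=1..m. Z i \<omega>) - m * p\<bar>}" for m
  define r where "r = exp (-2 * \<epsilon>\<^sup>2 / (b - a)\<^sup>2)"
  have [measurable]: "i \<ge> 1 \<Longrightarrow> random_variable borel (Z i)" for i
    using indep unfolding indep_vars_def by auto
  have [measurable]: "A m \<in> sets M" for m
    unfolding A_def by measurable
  have tail: "prob (A m) \<le> 2 * r ^ m" for m
  proof (cases "m = 0")
    case True
    then show ?thesis using prob_le_1[of "A 0"] by (simp del: prob_le_1)
  next
    case False
    interpret Hoeffding_ineq M "{1..m}" Z "\<lambda>_. a" "\<lambda>_. b" "m * p"
    proof unfold_locales
      show "indep_vars (\<lambda>_. borel) Z {1..m}"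
        by (rule indep_vars_subset[OF indep]) auto
      show "AE \<omega> in M. Z i \<omega> \<in> {a..b}" if "i \<in> {1..m}" for i
        using bounded that by simp
    qed (simp_all add: mean)
    have "prob (A m) \<le> 2 * exp (-2 * (m * \<epsilon>)\<^sup>2 / (\<Sum>i\<in>{1..m}. (b - a)\<^sup>2))"
      using Hoeffding_ineq_abs_ge[of "m * \<epsilon>"] False \<open>a < b\<close> \<open>\<epsilon> > 0\<close> by (simp add: A_def)
    also have "-2 * (m * \<epsilon>)\<^sup>2 / (\<Sum>i\<in>{1..m}. (b - a)\<^sup>2) = m * (-2 * \<epsilon>\<^sup>2 / (b - a)\<^sup>2)"
      using False \<open>a < b\<close> by (simp add: power_mult_distrib power2_eq_square)
    also have "exp (m * (-2 * \<epsilon>\<^sup>2 / (b - a)\<^sup>2)) = r ^ m"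
      unfolding r_def by (rule exp_of_nat_mult)
    finally show ?thesis .
  qed
  have "r < 1"
    using \<open>a < b\<close> \<open>\<epsilon> > 0\<close> by (simp add: r_def)
  then have "summable (\<lambda>m. 2 * r ^ m)"
    by (simp add: r_def)
  then have "summable (\<lambda>m. prob (A m))"
    by (rule summable_comparison_test'[where N=0]) (use tail in auto)
  then have "AE \<omega> in M. eventually (\<lambda>m. \<omega> \<in> space M - A m) sequentially"
    by (intro borel_cantelli_AE1) (auto simp: emeasure_eq_measure)
  then show ?thesis
    by (rule eventually_mono) (auto elim!: eventually_mono simp: A_def)
qed

lemma (in prob_space) AE_average_tendsto_indep_bounded:
  fixes Z :: "nat \<Rightarrow> 'a \<Rightarrow> real" and a b p :: real
  assumes indep: "indep_vars (\<lambda>_. borel) Z {1..}"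
    and bounded: "\<And>i. i \<ge> 1 \<Longrightarrow> AE \<omega> in M. Z i \<omega> \<in> {a..b}"
    and mean: "\<And>i. i \<ge> 1 \<Longrightarrow> expectation (Z i) = p"
    and "a < b"
  shows "AE \<omega> in M. (\<lambda>m. (\<Sum>i=1..m. Z i \<omega>) / m) \<longlonglongrightarrow> p"
proof -
  have "AE \<omega> in M. \<forall>n. eventually
      (\<lambda>m. \<bar>(\<Sum>i=1..m. Z i \<omega>) - m * p\<bar> < m * inverse (Suc n)) sequentially"
    using AE_eventually_sum_deviation_less[OF assms] by (simp add: AE_all_countable)
  then show ?thesis
  proof (rule eventually_mono)
    fix \<omega>
    assume dev: "\<forall>n. eventually (\<lambda>m. \<bar>(\<Sum>i=1..m. Z i \<omega>) - m * p\<bar> < m * inverse (Suc n)) sequentially"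
    show "(\<lambda>m. (\<Sum>i=1..m. Z i \<omega>) / m) \<longlonglongrightarrow> p"
    proof (rule tendstoI)
      fix r :: real assume "r > 0"
      then obtain n where n: "inverse (Suc n) < r"
        using reals_Archimedean by blast
      from dev[rule_format, of n] eventually_gt_at_top[of 0]
      show "eventually (\<lambda>m. dist ((\<Sum>i=1..m. Z i \<omega>) / m) p < r) sequentially"
      proof eventually_elim
        case (elim m)
        then have "dist ((\<Sum>i=1..m. Z i \<omega>) / m) p = \<bar>(\<Sum>i=1..m. Z i \<omega>) - m * p\<bar> / m"
          by (simp add: dist_real_def field_simps)
        also have "\<dots> < inverse (Suc n)"
          using elim by (simp add: divide_less_eq mult.commute)
        finally show ?case using n by simp
      qed
    qed
  qed
qed

lemma (in prob_space) AE_emp_quantile_tendsto: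
  fixes ts :: "'a \<Rightarrow> nat \<Rightarrow> real list"
  assumes \<beta>: "0 < \<beta>" "\<beta> \<le> 1"
    and nonempty: "\<And>\<omega>. eventually (\<lambda>m. ts \<omega> m \<noteq> []) sequentially"
    and below: "\<And>c. c < t \<Longrightarrow> AE \<omega> in M. eventually (\<lambda>m. frac_below c (ts \<omega> m) < \<beta>) sequentially"
    and above: "\<And>c. t < c \<Longrightarrow> AE \<omega> in M. eventually (\<lambda>m. \<beta> \<le> frac_below c (ts \<omega> m)) sequentially"
  shows "AE \<omega> in M. (\<lambda>m. emp_quantile \<beta> (ts \<omega> m)) \<longlonglongrightarrow> t"
proof -
  have "AE \<omega> in M. \<forall>n.
      eventually (\<lambda>m. frac_below (t - inverse (Suc n)) (ts \<omega> m) < \<beta>) sequentially \<and>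
      eventually (\<lambda>m. \<beta> \<le> frac_below (t + inverse (Suc n)) (ts \<omega> m)) sequentially"
    using below above by (simp add: AE_all_countable AE_conj_iff)
  then show ?thesis
  proof (rule eventually_mono, intro emp_quantile_tendsto_if_frac_below[where
        a="\<lambda>n. t - inverse (Suc n)" and b="\<lambda>n. t + inverse (Suc n)"])
    show "(\<lambda>n. t - inverse (Suc n)) \<longlonglongrightarrow> t"
      using LIMSEQ_inverse_real_of_nat_add_minus[of t] by simp
  qed (use \<beta> nonempty LIMSEQ_inverse_real_of_nat_add in auto)
qed

lemma (in prob_space) expectation_indicator_density_less:
  assumes distr: "distributed M lborel X (\<lambda>y. ennreal (f z y))"
    and [measurable]: "f z \<in> borel_measurable borel"
    and nonneg: "\<And>y. 0 \<le> f z y"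
  shows "expectation (\<lambda>\<omega>. indicator {..<c} (f z (X \<omega>))) = 1 - profile f z c"
proof -
  have [measurable]: "X \<in> borel_measurable M"
    using distributed_measurable[OF distr] by simp
  have "profile f z c = (\<integral>y. f z y * indicator {y. c \<le> f z y} y \<partial>lborel)"
    unfolding profile_def set_lebesgue_integral_def by (simp add: mult.commute)
  also have "\<dots> = expectation (\<lambda>\<omega>. indicator {y. c \<le> f z y} (X \<omega>))"
    by (rule distributed_integral[OF distr]) (auto simp: nonneg)
  finally have "1 - profile f z c = expectation (\<lambda>\<omega>. 1 - indicator {y. c \<le> f z y} (X \<omega>))"
    by (subst Bochner_Integration.integral_diff)
      (auto simp: prob_space intro: integrable_const_bound[where B=1])
  also have "\<dots> = expectation (\<lambda>\<omega>. indicator {..<c} (f z (X \<omega>)))"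
    by (rule Bochner_Integration.integral_cong) (auto simp: indicator_def)
  finally show ?thesis ..
qed

lemma (in prob_space) AE_frac_below_density_values_tendsto:
  fixes Y :: "nat \<Rightarrow> 'a \<Rightarrow> real"
  assumes indep: "indep_vars (\<lambda>_. borel) Y {1..}"
    and distr: "\<And>i. i \<ge> 1 \<Longrightarrow> distributed M lborel (Y i) (\<lambda>y. ennreal (f (x i) y))"
    and [measurable]: "\<And>z. f z \<in> borel_measurable borel"
    and nonneg: "\<And>z y. 0 \<le> f z y"
    and common_profile: "\<And>i. i \<ge> 1 \<Longrightarrow> profile f (x i) c = g"
  shows "AE \<omega> in M. (\<lambda>m. frac_below c (map (\<lambda>i. f (x i) (Y i \<omega>)) [1..<Suc m])) \<longlonglongrightarrow> 1 - g"
proof -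
  have "AE \<omega> in M. (\<lambda>m. (\<Sum>i=1..m. indicator {..<c} (f (x i) (Y i \<omega>))) / m) \<longlonglongrightarrow> 1 - g"
  proof (rule AE_average_tendsto_indep_bounded[where a=0 and b=1])
    show "indep_vars (\<lambda>_. borel) (\<lambda>i \<omega>. indicator {..<c} (f (x i) (Y i \<omega>))) {1..}"
      by (rule indep_vars_compose2[OF indep]) measurable
    show "expectation (\<lambda>\<omega>. indicator {..<c} (f (x i) (Y i \<omega>))) = 1 - g" if "i \<ge> 1" for i
      using expectation_indicator_density_less[where f=f and z="x i", OF distr[OF that]]
        common_profile[OF that] nonneg by simp
  qed auto
  then show ?thesis
    by (simp only: frac_below_map_upt)
qed

lemma profile_antimono:
  assumes "f z \<in> borel_measurable borel" "\<And>y. 0 \<le> f z y" "integrable lborel (f z)" "s \<le> t"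
  shows "profile f z t \<le> profile f z s"
  unfolding profile_def set_lebesgue_integral_def
  using assms by (intro integral_mono integrable_mult_indicator) (auto simp: indicator_def)

theorem theorem4:
  fixes M :: "'a measure"
    and f :: "'x \<Rightarrow> real \<Rightarrow> real"
    and x :: "nat \<Rightarrow> 'x"
    and x0 :: "'x"
    and Y :: "nat \<Rightarrow> 'a \<Rightarrow> real"
    and \<alpha> t_star :: real
  assumes "prob_space M"
    and dens_meas: "\<And>z. f z \<in> borel_measurable borel"
    and dens_nonneg: "\<And>z y. 0 \<le> f z y"
    and dens_one: "\<And>z. (\<integral>\<^sup>+ y. ennreal (f z y) \<partial>lborel) = 1"
    and dens_cont: "\<And>z. continuous_on UNIV (f z)"
    and indep: "prob_space.indep_vars M (\<lambda>_. borel) Y {1..}"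
    and distr: "\<And>i. i \<ge> 1 \<Longrightarrow> distributed M lborel (Y i) (\<lambda>y. ennreal (f (x i) y))"
    and same_profile: "\<And>i t. i \<ge> 1 \<Longrightarrow> t \<ge> 0 \<Longrightarrow> profile f (x i) t = profile f x0 t"
    and alpha: "0 < \<alpha>" "\<alpha> < 1"
    and tstar: "t_star \<ge> 0" "profile f x0 t_star = 1 - \<alpha>"
    and tstar_unique: "\<And>t. t \<ge> 0 \<Longrightarrow> profile f x0 t = 1 - \<alpha> \<Longrightarrow> t = t_star"
  shows "AE \<omega> in M.
           (\<lambda>m. emp_quantile \<alpha> (map (\<lambda>i. f (x i) (Y i \<omega>)) [1..<Suc m])) \<longlonglongrightarrow> t_star"
proof -
  interpret prob_space M by fact
  define ts where "ts \<omega> m = map (\<lambda>i. f (x i) (Y i \<omega>)) [1..<Suc m]" for \<omega> m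
  have freq: "AE \<omega> in M. (\<lambda>m. frac_below c (ts \<omega> m)) \<longlonglongrightarrow> 1 - profile f x0 c" if "0 \<le> c" for c
    unfolding ts_def using same_profile[OF _ that]
    by (intro AE_frac_below_density_values_tendsto[where f=f and x=x, OF indep distr dens_meas dens_nonneg])
  have "integrable lborel (f x0)"
    using dens_one by (intro integrableI_nonneg) (auto simp: dens_meas dens_nonneg)
  note antimono = profile_antimono[where f=f and z=x0, OF dens_meas dens_nonneg this]
  have below: "AE \<omega> in M. eventually (\<lambda>m. frac_below c (ts \<omega> m) < \<alpha>) sequentially"
    if "c < t_star" for c
  proof (cases "c < 0")
    case True
    then have "\<not> f z y < c" for z y
      using dens_nonneg[of z y] by linarith
    then have "frac_below c (ts \<omega> m) = 0" for \<omega> m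
      by (simp add: frac_below_def ts_def filter_empty_conv)
    then show ?thesis using alpha by simp
  next
    case False
    then have "profile f x0 t_star \<le> profile f x0 c" "profile f x0 c \<noteq> 1 - \<alpha>"
      using antimono[of c t_star] tstar_unique[of c] that by auto
    then have "1 - profile f x0 c < \<alpha>"
      using tstar by simp
    with freq[of c] False show ?thesis
      by (auto elim!: eventually_mono dest: order_tendstoD(2))
  qed
  have above: "AE \<omega> in M. eventually (\<lambda>m. \<alpha> \<le> frac_below c (ts \<omega> m)) sequentially"
    if "t_star < c" for c
  proof -
    have "profile f x0 c \<le> profile f x0 t_star" "profile f x0 c \<noteq> 1 - \<alpha>"
      using antimono[of t_star c] tstar_unique[of c] tstar that by auto
    then have "\<alpha> < 1 - profile f x0 c"
      using tstar by simp
    with freq[of c] tstar that show ?thesis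
      by (auto elim!: eventually_mono dest: order_tendstoD(1))
  qed
  have "AE \<omega> in M. (\<lambda>m. emp_quantile \<alpha> (ts \<omega> m)) \<longlonglongrightarrow> t_star"
  proof (rule AE_emp_quantile_tendsto[OF _ _ _ below above])
    show "eventually (\<lambda>m. ts \<omega> m \<noteq> []) sequentially" for \<omega>
      using eventually_gt_at_top[of 0] by (rule eventually_mono) (simp add: ts_def)
  qed (use alpha in auto)
  then show ?thesis
    by (simp add: ts_def)
qed

end
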